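(* The language $L_5=\{\omega\in\{a,b,c\}^*:\ \text{exactly one of } |\omega|_a=|\omega|_b \text{ and } |\omega|_a=|\omega|_c \text{ holds}\}$ is recognized by some QPA with probability $\frac47$: there is a QPA which accepts every $x\in L_5$ with probability at least $\frac47$ and rejects every $x\in\{a,b,c\}^*\setminus L_5$ with probability at least $\frac47$.
   Context: $|\omega|_i$ denotes the number of occurrences of the symbol $i$ in $\omega$. A QPA is a tuple $A=(Q,\Sigma,T,q_0,Q_a,Q_r,\delta)$ with $Q$ a finite set of states, $\Sigma$ a finite input alphabet, $T$ a finite stack alphabet, $q_0\in Q$, $Q_a,Q_r\subset Q$ disjoint, $\Gamma=\Sigma\cup\{\#,\$\}$ (end-markers), $\Delta=T\cup\{Z_0\}$ ($Z_0\notin T$ the stack base symbol), and $\delta:Q\times\Gamma\times\Delta\times Q\times\{\downarrow,\to\}\times\Delta^*\to\mathbb{C}$ such that whenever $\delta(q,\alpha,\beta,q',d,\omega)\ne0$: $|\omega|\le2$; if $|\omega|=2$ then $\omega_1=\beta$; if $\beta=Z_0$ then $\omega\in Z_0T^*$; if $\beta\ne Z_0$ then $\omega\in T^*$; and such that the evolution operator $U_A$ is unitary. A configuration is $|\nu_i q_j\nu_k,\omega_l\rangle$ with $q_j\in Q$, $\nu_i\nu_k\in\#\Sigma^*\$$, input head on the first symbol of $\nu_k$, $\omega_l\in Z_0T^*$ the stack with head on its last symbol; $C$ is the set of configurations, $H_A=\ell_2(C)$; for $c=|\nu_i q_j\sigma\nu_k,\omega_l\tau\rangle$, $U_A|c\rangle=\sum_{(q,d,\omega)}\delta(q_j,\sigma,\tau,q,d,\omega)|f(c,d,q),\omega_l\omega\rangle$,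 where $f(c,\downarrow,q)=\nu_i q\sigma\nu_k$, $f(c,\to,q)=\nu_i\sigma q\nu_k$. Recognition: $E_a,E_r,E_n$ are the subspaces spanned by configurations with state in $Q_a$, in $Q_r$, in neither; on input $x$ start in $|q_0\#x\$,Z_0\rangle$, repeatedly apply $U_A$ and measure w.r.t. $E_a\oplus E_r\oplus E_n$, halting on ``accept''/``reject'' and otherwise continuing from the normalized projection onto $E_n$; acceptance/rejection probability is the total probability of eventually halting with that outcome. *)

theory Defs
  imports "HOL-Analysis.Analysis"
begin

datatype abc = a | b | c

text \<open>Tape symbols Gamma = Sigma plus the end-markers # (LEnd) and $ (REnd).\<close>
datatype tsym = Sym abc | LEnd | REnd

text \<open>Stack symbols Delta = T plus the base symbol Z0; stack symbols of T are
  encoded as natural numbers (TS t with t in the finite set T).\<close>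
datatype stk = Z0 | TS nat

datatype dir = Stay | Right

text \<open>A QPA over the input alphabet {a,b,c}; states and stack symbols are
  natural numbers taken from the finite sets Q and T.\<close>
record qpa =
  Qs  :: "nat set"
  Ts  :: "nat set"
  q0  :: nat
  Qa  :: "nat set"
  Qr  :: "nat set"
  delta :: "nat \<Rightarrow> tsym \<Rightarrow> stk \<Rightarrow> nat \<Rightarrow> dir \<Rightarrow> stk list \<Rightarrow> complex"

definition Delta :: "qpa \<Rightarrow> stk set" where
  "Delta A = insert Z0 (TS ` Ts A)"

definition in_TStar :: "qpa \<Rightarrow> stk list \<Rightarrow> bool" where
  "in_TStar A w \<longleftrightarrow> (\<forall>s\<in>set w. s \<in> TS ` Ts A)"

definition in_Z0TStar :: "qpa \<Rightarrow> stk list \<Rightarrow> bool" where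
  "in_Z0TStar A w \<longleftrightarrow> w \<noteq> [] \<and> hd w = Z0 \<and> in_TStar A (tl w)"

text \<open>Configurations |nu_i q nu_k, omega>: (x, i, q, s) where #x$ = nu_i nu_k,
  the input head is on position i of the tape #x$ (i.e. length nu_i = i),
  q is the state, and s is the stack (head on its last symbol).\<close>
type_synonym config = "abc list \<times> nat \<times> nat \<times> stk list"

definition tape :: "abc list \<Rightarrow> tsym list" where
  "tape x = LEnd # map Sym x @ [REnd]"

definition Conf :: "qpa \<Rightarrow> config set" where
  "Conf A = {(x, i, q, s). i < length (tape x) \<and> q \<in> Qs A \<and> in_Z0TStar A s}"

text \<open>Amplitude <d|U_A|c>: the coefficient of |d> in U_A|c>.\<close>
fun amp :: "qpa \<Rightarrow> config \<Rightarrow> config \<Rightarrow> complex" where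
  "amp A (x, i, q, s) (x', i', q', s') =
     (if x' = x \<and> s \<noteq> [] \<and> take (length s - 1) s' = butlast s
         \<and> length s' \<ge> length s - 1 \<and> (i' = i \<or> i' = Suc i)
      then delta A q (tape x ! i) (last s) q' (if i' = i then Stay else Right)
             (drop (length s - 1) s')
      else 0)"

definition unitary_UA :: "qpa \<Rightarrow> bool" where
  "unitary_UA A \<longleftrightarrow>
     (\<forall>c\<in>Conf A. \<forall>d. amp A c d \<noteq> 0 \<longrightarrow> d \<in> Conf A) \<and>
     (\<forall>c\<in>Conf A. \<forall>c'\<in>Conf A.
        ((\<lambda>d. amp A c d * cnj (amp A c' d)) has_sum (if c = c' then 1 else 0)) (Conf A)) \<and>
     (\<forall>d\<in>Conf A. \<forall>d'\<in>Conf A.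
        ((\<lambda>c. amp A c d * cnj (amp A c d')) has_sum (if d = d' then 1 else 0)) (Conf A))"

definition is_QPA :: "qpa \<Rightarrow> bool" where
  "is_QPA A \<longleftrightarrow>
     finite (Qs A) \<and> finite (Ts A) \<and> q0 A \<in> Qs A \<and>
     Qa A \<subseteq> Qs A \<and> Qr A \<subseteq> Qs A \<and> Qa A \<inter> Qr A = {} \<and>
     (\<forall>q \<alpha> \<beta> q' d \<omega>. delta A q \<alpha> \<beta> q' d \<omega> \<noteq> 0 \<longrightarrow>
        q \<in> Qs A \<and> q' \<in> Qs A \<and> \<beta> \<in> Delta A \<and> set \<omega> \<subseteq> Delta A \<and>
        length \<omega> \<le> 2 \<and>
        (length \<omega> = 2 \<longrightarrow> \<omega> ! 0 = \<beta>) \<and>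
        (\<beta> = Z0 \<longrightarrow> in_Z0TStar A \<omega>) \<and>
        (\<beta> \<noteq> Z0 \<longrightarrow> in_TStar A \<omega>)) \<and>
     unitary_UA A"

definition supp_v :: "(config \<Rightarrow> complex) \<Rightarrow> config set" where
  "supp_v \<psi> = {c. \<psi> c \<noteq> 0}"

definition applyU :: "qpa \<Rightarrow> (config \<Rightarrow> complex) \<Rightarrow> config \<Rightarrow> complex" where
  "applyU A \<psi> = (\<lambda>d. \<Sum>c\<in>supp_v \<psi>. \<psi> c * amp A c d)"

definition proj :: "(nat \<Rightarrow> bool) \<Rightarrow> (config \<Rightarrow> complex) \<Rightarrow> config \<Rightarrow> complex" where
  "proj P \<psi> = (\<lambda>(x, i, q, s). if P q then \<psi> (x, i, q, s) else 0)"

definition sqnorm :: "(config \<Rightarrow> complex) \<Rightarrow> real" where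
  "sqnorm \<psi> = (\<Sum>c\<in>supp_v \<psi>. (cmod (\<psi> c))\<^sup>2)"

definition init_vec :: "qpa \<Rightarrow> abc list \<Rightarrow> config \<Rightarrow> complex" where
  "init_vec A x = (\<lambda>c. if c = (x, 0, q0 A, [Z0]) then 1 else 0)"

text \<open>Unnormalised non-halting component after n steps (U then projection onto E_n).\<close>
primrec run_vec :: "qpa \<Rightarrow> abc list \<Rightarrow> nat \<Rightarrow> config \<Rightarrow> complex" where
  "run_vec A x 0 = init_vec A x"
| "run_vec A x (Suc n) =
     proj (\<lambda>q. q \<notin> Qa A \<and> q \<notin> Qr A) (applyU A (run_vec A x n))"

definition acc_prob :: "qpa \<Rightarrow> abc list \<Rightarrow> real" where
  "acc_prob A x = (\<Sum>n. sqnorm (proj (\<lambda>q. q \<in> Qa A) (applyU A (run_vec A x n))))"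

definition rej_prob :: "qpa \<Rightarrow> abc list \<Rightarrow> real" where
  "rej_prob A x = (\<Sum>n. sqnorm (proj (\<lambda>q. q \<in> Qr A) (applyU A (run_vec A x n))))"

definition L5 :: "abc list set" where
  "L5 = {w. (count_list w a = count_list w b) \<noteq> (count_list w a = count_list w c)}"

end

theory Submission
  imports Defs
begin

(*
  The automaton first applies, without reading input, a Householder reflection that sends
  its initial state to the superposition (14, 14, 20, 13)/31 of four branches.  Branches
  0, 1, 2 deterministically keep the counters |w|_a - |w|_b, |w|_a - |w|_c and
  |w|_b - |w|_c (sign in the state, magnitude on the stack); branch 3 idles.  At the right
  end-marker branches 0 and 1 accept iff their counter is zero, branch 2 accepts iff it is
  non-zero, and branch 3 rejects.  If w is in L5, exactly one of the first two counters
  vanishes, and then the third one does not: w is accepted with probability at least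
  (14^2 + 20^2)/31^2 > 4/7.  Otherwise the rejection probability is at least
  min((20^2 + 13^2)/31^2, (2 * 14^2 + 13^2)/31^2) > 4/7.

  Apart from the initial reflection every move is classical, and the auxiliary states 7-27
  complete the classical moves to a bijection of all configurations; so the time evolution is
  a permutation of the configurations composed with a block-diagonal orthogonal matrix.
*)

section \<open>Householder reflections\<close>

definition householder :: "'a set \<Rightarrow> ('a \<Rightarrow> real) \<Rightarrow> 'a \<Rightarrow> 'a \<Rightarrow> real" where
  "householder S v p q = (if p = q then 1 else 0) - 2 * v p * v q / (\<Sum>r\<in>S. (v r)\<^sup>2)"

lemma householder_sym: "householder S v p q = householder S v q p"
  by (auto simp: householder_def mult.commute)

lemma householder_orthonormal:
  assumes "finite S" "p \<in> S" "p' \<in> S" "(\<Sum>r\<in>S. (v r)\<^sup>2) \<noteq> 0"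
  shows "(\<Sum>r\<in>S. householder S v p r * householder S v p' r) = (if p = p' then 1 else 0)"
proof -
  define N where "N = (\<Sum>r\<in>S. (v r)\<^sup>2)"
  have N: "N \<noteq> 0" using assms(4) by (simp add: N_def)
  have "householder S v p r * householder S v p' r =
      (if p = r then (if p = p' then 1 else 0) else 0) - (if p = r then 2 * v p' * v r / N else 0)
      - (if p' = r then 2 * v p * v r / N else 0) + 4 * v p * v p' / N\<^sup>2 * (v r)\<^sup>2" for r
    unfolding householder_def N_def[symmetric] using N by (auto simp: field_simps power2_eq_square)
  then have "(\<Sum>r\<in>S. householder S v p r * householder S v p' r) =
      (if p = p' then 1 else 0) - 2 * v p' * v p / N - 2 * v p * v p' / N + 4 * v p * v p' / N\<^sup>2 * N"
    using assms(1-3) by (simp add: sum.distrib sum_subtractf sum_distrib_left N_def)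
  also have "\<dots> = (if p = p' then 1 else 0)"
    using N by (simp add: power2_eq_square)
  finally show ?thesis .
qed

lemma amp_single_move:
  assumes "s \<noteq> []"
    and delta: "\<And>q' d \<omega>.
      delta A q (tape x ! i) (last s) q' d \<omega> = (if d = dir \<and> \<omega> = \<omega>0 then f q' else 0)"
  shows "amp A (x, i, q, s) (x', i', q', s') =
    (if x' = x \<and> i' = (if dir = Right then Suc i else i) \<and> s' = butlast s @ \<omega>0 then f q' else 0)"
proof -
  define n where "n = length s - 1"
  have stack: "(take n s' = butlast s \<and> n \<le> length s' \<and> drop n s' = \<omega>0) \<longleftrightarrow> s' = butlast s @ \<omega>0"
  proof
    assume "take n s' = butlast s \<and> n \<le> length s' \<and> drop n s' = \<omega>0"
    then show "s' = butlast s @ \<omega>0" by (metis append_take_drop_id)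
  qed (simp add: n_def)
  have head: "((i' = i \<or> i' = Suc i) \<and> (if i' = i then Stay else Right) = dir)
        \<longleftrightarrow> i' = (if dir = Right then Suc i else i)"
    by (cases dir) auto
  have "amp A (x, i, q, s) (x', i', q', s') =
    (if x' = x \<and> take n s' = butlast s \<and> n \<le> length s' \<and> (i' = i \<or> i' = Suc i)
     then delta A q (tape x ! i) (last s) q' (if i' = i then Stay else Right) (drop n s') else 0)"
    using assms(1) by (simp only: amp.simps n_def simp_thms)
  also have "\<dots> = (if x' = x \<and> i' = (if dir = Right then Suc i else i) \<and> s' = butlast s @ \<omega>0
                   then f q' else 0)"
    unfolding delta stack[symmetric] head[symmetric] by auto
  finally show ?thesis .
qed

lemma unitary_UA_permuted:
  assumes bij: "bij_betw g (Conf A) (Conf A)"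
    and amp: "\<And>cf d. cf \<in> Conf A \<Longrightarrow> amp A cf d = (if d \<in> Conf A then M cf (g d) else 0)"
    and rows: "\<And>cf cf'. cf \<in> Conf A \<Longrightarrow> cf' \<in> Conf A \<Longrightarrow>
      ((\<lambda>e. M cf e * cnj (M cf' e)) has_sum (if cf = cf' then 1 else 0)) (Conf A)"
    and cols: "\<And>e e'. e \<in> Conf A \<Longrightarrow> e' \<in> Conf A \<Longrightarrow>
      ((\<lambda>cf. M cf e * cnj (M cf e')) has_sum (if e = e' then 1 else 0)) (Conf A)"
  shows "unitary_UA A"
  unfolding unitary_UA_def
proof (intro conjI ballI allI impI)
  fix cf d assume "cf \<in> Conf A" "amp A cf d \<noteq> 0"
  then show "d \<in> Conf A" using amp by (auto split: if_splits)
next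
  fix cf cf' assume cf: "cf \<in> Conf A" "cf' \<in> Conf A"
  have "((\<lambda>d. M cf (g d) * cnj (M cf' (g d))) has_sum (if cf = cf' then 1 else 0)) (Conf A)"
    using has_sum_reindex_bij_betw[OF bij, of "\<lambda>e. M cf e * cnj (M cf' e)"] rows[OF cf] by simp
  then show "((\<lambda>d. amp A cf d * cnj (amp A cf' d)) has_sum (if cf = cf' then 1 else 0)) (Conf A)"
    by (rule has_sum_cong[THEN iffD1, rotated]) (use amp cf in auto)
next
  fix d d' assume d: "d \<in> Conf A" "d' \<in> Conf A"
  have "g d \<in> Conf A" "g d' \<in> Conf A" "g d = g d' \<longleftrightarrow> d = d'"
    using bij d by (auto simp: bij_betw_def inj_on_def)
  then have "((\<lambda>cf. M cf (g d) * cnj (M cf (g d'))) has_sum (if d = d' then 1 else 0)) (Conf A)"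
    using cols by presburger
  then show "((\<lambda>cf. amp A cf d * cnj (amp A cf d')) has_sum (if d = d' then 1 else 0)) (Conf A)"
    by (rule has_sum_cong[THEN iffD1, rotated]) (use amp d in auto)
qed

fun conf_state :: "config \<Rightarrow> nat" where
  "conf_state (x, i, q, s) = q"

definition superpos :: "'i set \<Rightarrow> ('i \<Rightarrow> config) \<Rightarrow> ('i \<Rightarrow> complex) \<Rightarrow> config \<Rightarrow> complex" where
  "superpos K cs \<alpha> = (\<lambda>d. \<Sum>k\<in>K. if d = cs k then \<alpha> k else 0)"

lemma superpos_at:
  assumes "finite K" "inj_on cs K" "k \<in> K"
  shows "superpos K cs \<alpha> (cs k) = \<alpha> k"
proof -
  have "(\<Sum>j\<in>K. if cs k = cs j then \<alpha> j else 0) = (\<Sum>j\<in>K. if j = k then \<alpha> j else 0)"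
    using assms by (intro sum.cong) (auto simp: inj_on_def)
  then show ?thesis using assms(1,3) by (simp add: superpos_def)
qed

lemma superpos_outside: "d \<notin> cs ` K \<Longrightarrow> superpos K cs \<alpha> d = 0"
  unfolding superpos_def by (rule sum.neutral) auto

lemma supp_v_superpos: "supp_v (superpos K cs \<alpha>) \<subseteq> cs ` K"
  unfolding supp_v_def using superpos_outside by blast

lemma superpos_cong: "(\<And>k. k \<in> K \<Longrightarrow> \<alpha> k = \<beta> k) \<Longrightarrow> superpos K cs \<alpha> = superpos K cs \<beta>"
  unfolding superpos_def by (auto intro!: sum.cong)

lemma superpos_zero: "(\<And>k. k \<in> K \<Longrightarrow> \<alpha> k = 0) \<Longrightarrow> superpos K cs \<alpha> = (\<lambda>_. 0)"
  unfolding superpos_def by (auto intro!: sum.neutral)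

lemma applyU_superpos:
  assumes "finite K" "inj_on cs K"
    and classical: "\<And>k d. k \<in> K \<Longrightarrow> amp A (cs k) d = (if d = f (cs k) then 1 else 0)"
  shows "applyU A (superpos K cs \<alpha>) = superpos K (f \<circ> cs) \<alpha>"
proof
  fix d
  have "applyU A (superpos K cs \<alpha>) d = (\<Sum>e\<in>cs ` K. superpos K cs \<alpha> e * amp A e d)"
    unfolding applyU_def using assms(1) supp_v_superpos[of K cs \<alpha>]
    by (intro sum.mono_neutral_left) (auto simp: supp_v_def)
  also have "\<dots> = (\<Sum>k\<in>K. superpos K cs \<alpha> (cs k) * amp A (cs k) d)"
    by (simp add: sum.reindex[OF assms(2)])
  also have "\<dots> = (\<Sum>k\<in>K. if d = f (cs k) then \<alpha> k else 0)"
    using superpos_at[OF assms(1,2)] classical by (intro sum.cong) auto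
  finally show "applyU A (superpos K cs \<alpha>) d = superpos K (f \<circ> cs) \<alpha> d"
    by (simp add: superpos_def)
qed

lemma proj_superpos:
  "proj P (superpos K cs \<alpha>) = superpos K cs (\<lambda>k. if P (conf_state (cs k)) then \<alpha> k else 0)"
proof
  fix d :: config
  obtain x i q s where d: "d = (x, i, q, s)" by (cases d) auto
  have "d = cs k \<Longrightarrow> conf_state (cs k) = q" for k using d by (metis conf_state.simps)
  then show "proj P (superpos K cs \<alpha>) d =
      superpos K cs (\<lambda>k. if P (conf_state (cs k)) then \<alpha> k else 0) d"
    unfolding d proj_def superpos_def by (auto intro!: sum.cong sum.neutral)
qed

lemma sqnorm_superpos:
  assumes "finite K" "inj_on cs K"
  shows "sqnorm (superpos K cs \<alpha>) = (\<Sum>k\<in>K. (cmod (\<alpha> k))\<^sup>2)"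
proof -
  have "sqnorm (superpos K cs \<alpha>) = (\<Sum>e\<in>cs ` K. (cmod (superpos K cs \<alpha> e))\<^sup>2)"
    unfolding sqnorm_def using assms(1) supp_v_superpos[of K cs \<alpha>]
    by (intro sum.mono_neutral_left) (auto simp: supp_v_def)
  also have "\<dots> = (\<Sum>k\<in>K. (cmod (\<alpha> k))\<^sup>2)"
    by (simp add: sum.reindex[OF assms(2)] superpos_at[OF assms])
  finally show ?thesis .
qed

lemma applyU_zero: "applyU A (\<lambda>_. 0) = (\<lambda>_. 0)"
  by (simp add: applyU_def supp_v_def)

lemma proj_zero: "proj P (\<lambda>_. 0) = (\<lambda>_. 0)"
  by (auto simp: proj_def)

lemma sqnorm_zero: "sqnorm (\<lambda>_. 0) = 0"
  by (simp add: sqnorm_def supp_v_def)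

section \<open>Counters\<close>

definition letter_weight :: "nat \<Rightarrow> abc \<Rightarrow> int" where
  "letter_weight k l =
     (if k = 0 then (case l of a \<Rightarrow> 1 | b \<Rightarrow> -1 | c \<Rightarrow> 0)
      else if k = 1 then (case l of a \<Rightarrow> 1 | b \<Rightarrow> 0 | c \<Rightarrow> -1)
      else if k = 2 then (case l of a \<Rightarrow> 0 | b \<Rightarrow> 1 | c \<Rightarrow> -1)
      else 0)"

definition counter_value :: "nat \<Rightarrow> abc list \<Rightarrow> int" where
  "counter_value k w = (\<Sum>l\<leftarrow>w. letter_weight k l)"

lemma letter_weight_cases: "letter_weight k l \<in> {-1, 0, 1}"
  by (cases l) (auto simp: letter_weight_def)

lemma counter_value_snoc [simp]:
  "counter_value k (w @ [l]) = counter_value k w + letter_weight k l"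
  by (simp add: counter_value_def)

lemma counter_value_Nil [simp]: "counter_value k [] = 0"
  by (simp add: counter_value_def)

lemma counter_value_count:
  "counter_value 0 w = int (count_list w a) - int (count_list w b)"
  "counter_value 1 w = int (count_list w a) - int (count_list w c)"
  "counter_value 2 w = int (count_list w b) - int (count_list w c)"
  by (induction w rule: rev_induct) (auto simp: letter_weight_def split: abc.split)

lemma counter_value_idle: "k \<ge> 3 \<Longrightarrow> counter_value k w = 0"
  by (simp add: counter_value_def letter_weight_def)

lemma L5_iff_counter_values:
  "w \<in> L5 \<longleftrightarrow> (counter_value 0 w = 0) \<noteq> (counter_value 1 w = 0)"
  unfolding L5_def counter_value_count by simp

lemma counter_value_2_eq: "counter_value 2 w = counter_value 1 w - counter_value 0 w"
  unfolding counter_value_count by simp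

definition wf_stack :: "stk list \<Rightarrow> bool" where
  "wf_stack s \<longleftrightarrow> (\<exists>w. s = Z0 # w \<and> set w \<subseteq> {TS 0, TS 1})"

lemma wf_stack_Z0 [simp]: "wf_stack [Z0]"
  by (simp add: wf_stack_def)

lemma wf_stack_snoc [simp]: "wf_stack (s @ [TS n]) \<longleftrightarrow> wf_stack s \<and> n \<in> {0, 1}"
  unfolding wf_stack_def by (cases s) auto

lemma wf_stack_snoc2 [simp]:
  "wf_stack (s @ [TS n, TS m]) \<longleftrightarrow> wf_stack s \<and> n \<in> {0, 1} \<and> m \<in> {0, 1}"
  using wf_stack_snoc[of "s @ [TS n]" m] by simp

lemma wf_stack_Z0_TS [simp]: "wf_stack [Z0, TS n] \<longleftrightarrow> n \<in> {0, 1}"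
  using wf_stack_snoc[of "[Z0]" n] by simp

lemma wf_stack_nonempty: "wf_stack s \<Longrightarrow> s \<noteq> []"
  by (auto simp: wf_stack_def)

lemma wf_stack_butlast_last [simp]:
  "wf_stack s \<Longrightarrow> butlast s @ [last s] = s"
  "wf_stack s \<Longrightarrow> butlast s @ last s # w = s @ w"
  using wf_stack_nonempty
  by (metis append_butlast_last_id, metis append_butlast_last_id append.assoc append_Cons append_Nil)

lemma wf_stack_cases [consumes 1, case_names base TS0 TS1]:
  assumes "wf_stack s"
  obtains "s = [Z0]"
    | s' where "wf_stack s'" "s = s' @ [TS 0]"
    | s' where "wf_stack s'" "s = s' @ [TS 1]"
proof -
  obtain w where w: "s = Z0 # w" "set w \<subseteq> {TS 0, TS 1}"
    using assms by (auto simp: wf_stack_def)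
  then show thesis
    using that by (cases w rule: rev_cases) (auto simp: wf_stack_def)
qed

lemma wf_stack_replicate [simp]: "wf_stack (Z0 # replicate n (TS 0))"
  by (auto simp: wf_stack_def)

lemma wf_stack_last: "wf_stack s \<Longrightarrow> last s \<in> {Z0, TS 0, TS 1}"
  by (cases rule: wf_stack_cases) auto

lemma wf_stack_last_Z0_iff: "wf_stack s \<Longrightarrow> last s = Z0 \<longleftrightarrow> s = [Z0]"
  by (cases rule: wf_stack_cases) auto

(* Adds e \<in> {-1, 0, 1} to a counter in sign-magnitude form: an even state stands for the value
   n \<ge> 0 and an odd one for -n-1, where n is the number of TS 0 above Z0. *)
definition counter_step :: "int \<Rightarrow> nat \<times> stk list \<Rightarrow> nat \<times> stk list" where
  "counter_step e = (\<lambda>(q, s).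
     if e = 0 then (q, s)
     else if (e = 1) = even q then (q, s @ [TS 0])
     else if last s = TS 0 then (q, butlast s)
     else (if even q then Suc q else q - 1, s))"

definition counter_conf :: "nat \<Rightarrow> int \<Rightarrow> nat \<times> stk list" where
  "counter_conf k v =
     (if v \<ge> 0 then (2 * k, Z0 # replicate (nat v) (TS 0))
      else (2 * k + 1, Z0 # replicate (nat (- v - 1)) (TS 0)))"

lemma counter_step_inverse:
  assumes "e \<in> {-1, 0, 1}" "s \<noteq> []"
  shows "counter_step (- e) (counter_step e (q, s)) = (q, s)"
proof -
  have "last s = TS 0 \<Longrightarrow> butlast s @ [TS 0] = s"
    using assms(2) by (metis append_butlast_last_id)
  then show ?thesis using assms(1) by (auto simp: counter_step_def)
qed

lemma counter_step_div2: "fst (counter_step e (q, s)) div 2 = q div 2"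
  by (auto simp: counter_step_def elim: oddE)

lemma counter_step_wf_stack: "wf_stack s \<Longrightarrow> wf_stack (snd (counter_step e (q, s)))"
  by (cases rule: wf_stack_cases) (auto simp: counter_step_def)

lemma counter_step_top:
  assumes "s \<noteq> []"
  shows "counter_step e (q, s) =
    (fst (counter_step e (q, [last s])), butlast s @ snd (counter_step e (q, [last s])))"
proof -
  have "s = butlast s @ [last s]" using assms by simp
  then show ?thesis by (auto simp: counter_step_def)
qed

lemma replicate_butlast: "butlast (replicate n x) = replicate (n - 1) x"
  by (simp add: butlast_conv_take)

lemma counter_step_counter_conf:
  assumes "e \<in> {-1, 0, 1}"
  shows "counter_step e (counter_conf k v) = counter_conf k (v + e)"
proof -
  consider (idle) "e = 0" | (grow_pos) "e = 1" "v \<ge> 0" | (grow_neg) "e = -1" "v < 0"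
    | (shrink_pos) "e = -1" "v > 0" | (shrink_neg) "e = 1" "v < -1"
    | (cross_down) "e = -1" "v = 0" | (cross_up) "e = 1" "v = -1"
    using assms by fastforce
  then show ?thesis
  proof cases
    case grow_pos
    then have "nat (v + e) = Suc (nat v)" by simp
    then show ?thesis
      using grow_pos by (simp add: counter_step_def counter_conf_def replicate_append_same)
  next
    case grow_neg
    then have "nat (- (v + e) - 1) = Suc (nat (- v - 1))" by simp
    then show ?thesis
      using grow_neg by (simp add: counter_step_def counter_conf_def replicate_append_same)
  next
    case shrink_pos
    then have "nat (v + e) = nat v - 1" "nat v \<noteq> 0" by simp_all
    then show ?thesis
      using shrink_pos by (simp add: counter_step_def counter_conf_def replicate_butlast)
  next
    case shrink_neg
    then have "nat (- (v + e) - 1) = nat (- v - 1) - 1" "nat (- v - 1) \<noteq> 0" by simp_all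
    then show ?thesis
      using shrink_neg by (simp add: counter_step_def counter_conf_def replicate_butlast)
  qed (auto simp: counter_step_def counter_conf_def)
qed

section \<open>The automaton\<close>

(* Branch k runs in the states 2k and 2k + 1 below 7.  The states 7-13, and the moves on the
   end-markers into the states 14-27, only serve to make the classical moves a bijection of the
   configurations. *)
definition move :: "nat \<Rightarrow> tsym \<Rightarrow> stk \<Rightarrow> nat \<times> dir \<times> stk list" where
  "move q \<sigma> \<beta> =
    (if q < 7 then
       (case \<sigma> of
         LEnd \<Rightarrow> (if \<beta> = Z0 then (q, Right, [Z0]) else if \<beta> = TS 0 then (q, Stay, [])
                  else (q, Right, [TS 0]))
       | Sym l \<Rightarrow>
           (case counter_step (letter_weight (q div 2) l) (q, [\<beta>]) of (q', \<omega>) \<Rightarrow> (q', Right, \<omega>))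
       | REnd \<Rightarrow> (if \<beta> = TS 0 then (q + 21, Stay, []) else (q + 14, Stay, [\<beta>])))
     else if q < 14 then
       (case \<sigma> of
         LEnd \<Rightarrow> (if \<beta> = Z0 then (q, Right, [Z0]) else if \<beta> = TS 0 then (q, Stay, [])
                  else (q - 7, Right, [\<beta>]))
       | Sym l \<Rightarrow> (if \<beta> = Z0 then (q, Right, [Z0]) else (q, Stay, [\<beta>]))
       | REnd \<Rightarrow> (q, Stay, [\<beta>, TS 0]))
     else if q < 21 then (case \<sigma> of REnd \<Rightarrow> (q - 7, Stay, [\<beta>, TS 1]) | _ \<Rightarrow> (q, Stay, [\<beta>]))
     else (case \<sigma> of REnd \<Rightarrow> (q - 7, Stay, [\<beta>, TS 0]) | _ \<Rightarrow> (q, Stay, [\<beta>])))"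

definition branch_starts :: "nat set" where
  "branch_starts = {0, 2, 4, 6}"

(* 31 e_0 - (14, 14, 20, 13): the reflection along it swaps e_0 and (14, 14, 20, 13)/31. *)
definition split_vector :: "nat \<Rightarrow> real" where
  "split_vector q = (if q = 0 then 17 else if q = 2 then -14 else if q = 4 then -20 else -13)"

definition split_amp :: "nat \<Rightarrow> nat \<Rightarrow> real" where
  "split_amp = householder branch_starts split_vector"

definition L5_delta :: "nat \<Rightarrow> tsym \<Rightarrow> stk \<Rightarrow> nat \<Rightarrow> dir \<Rightarrow> stk list \<Rightarrow> complex" where
  "L5_delta q \<sigma> \<beta> q' d \<omega> =
    (if q \<in> branch_starts \<and> \<sigma> = LEnd \<and> \<beta> = Z0 then
       (if q' \<in> branch_starts \<and> d = Right \<and> \<omega> = [Z0] then complex_of_real (split_amp q q') else 0)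
     else if q < 28 \<and> \<beta> \<in> {Z0, TS 0, TS 1} \<and> move q \<sigma> \<beta> = (q', d, \<omega>) then 1 else 0)"

definition L5_qpa :: qpa where
  "L5_qpa = \<lparr>Qs = {..<28}, Ts = {0, 1}, q0 = 0, Qa = {14, 16, 19, 25, 26},
             Qr = {15, 17, 18, 20, 21, 22, 23, 24, 27}, delta = L5_delta\<rparr>"

lemma L5_qpa_simps [simp]:
  "Qs L5_qpa = {..<28}" "Ts L5_qpa = {0, 1}" "q0 L5_qpa = 0" "Qa L5_qpa = {14, 16, 19, 25, 26}"
  "Qr L5_qpa = {15, 17, 18, 20, 21, 22, 23, 24, 27}" "delta L5_qpa = L5_delta"
  by (simp_all add: L5_qpa_def)

lemma move_wf:
  assumes "q < 28" "\<beta> \<in> {Z0, TS 0, TS 1}" "move q \<sigma> \<beta> = (q', d, \<omega>)"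
  shows "q' < 28 \<and> set \<omega> \<subseteq> {Z0, TS 0, TS 1} \<and> length \<omega> \<le> 2 \<and>
         (length \<omega> = 2 \<longrightarrow> \<omega> ! 0 = \<beta>) \<and>
         (\<beta> = Z0 \<longrightarrow> \<omega> \<noteq> [] \<and> hd \<omega> = Z0 \<and> set (tl \<omega>) \<subseteq> {TS 0, TS 1}) \<and>
         (\<beta> \<noteq> Z0 \<longrightarrow> set \<omega> \<subseteq> {TS 0, TS 1})"
  using assms unfolding move_def counter_step_def
  by (cases \<sigma>) (auto split: if_splits)

lemma L5_delta_wf:
  assumes "L5_delta q \<alpha> \<beta> q' d \<omega> \<noteq> 0"
  shows "q < 28 \<and> q' < 28 \<and> \<beta> \<in> {Z0, TS 0, TS 1} \<and> set \<omega> \<subseteq> {Z0, TS 0, TS 1} \<and>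
         length \<omega> \<le> 2 \<and> (length \<omega> = 2 \<longrightarrow> \<omega> ! 0 = \<beta>) \<and>
         (\<beta> = Z0 \<longrightarrow> \<omega> \<noteq> [] \<and> hd \<omega> = Z0 \<and> set (tl \<omega>) \<subseteq> {TS 0, TS 1}) \<and>
         (\<beta> \<noteq> Z0 \<longrightarrow> set \<omega> \<subseteq> {TS 0, TS 1})"
  using assms move_wf[of q \<beta> \<alpha> q' d \<omega>]
  by (auto simp: L5_delta_def branch_starts_def split: if_splits)

lemma Conf_L5_qpa: "Conf L5_qpa = {(x, i, q, s). i < length x + 2 \<and> q < 28 \<and> wf_stack s}"
proof -
  have "in_Z0TStar L5_qpa s \<longleftrightarrow> wf_stack s" for s
    unfolding in_Z0TStar_def in_TStar_def wf_stack_def by (cases s) auto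
  then show ?thesis unfolding Conf_def tape_def by auto
qed

lemma tape_nth_0 [simp]: "tape x ! 0 = LEnd"
  by (simp add: tape_def)

lemma tape_nth:
  "i < length x + 2 \<Longrightarrow>
    tape x ! i = (if i = 0 then LEnd else if i \<le> length x then Sym (x ! (i - 1)) else REnd)"
  unfolding tape_def by (auto simp: nth_append nth_Cons')

section \<open>The classical moves permute the configurations\<close>

fun next_conf :: "config \<Rightarrow> config" where
  "next_conf (x, i, q, s) =
     (case move q (tape x ! i) (last s) of (q', d, \<omega>) \<Rightarrow>
        (x, if d = Right then Suc i else i, q', butlast s @ \<omega>))"

fun prev_conf :: "config \<Rightarrow> config" where
  "prev_conf (x, i, q, s) =
    (if i = 0 then (if q < 14 then (x, 0, q, s @ [TS 0]) else (x, 0, q, s))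
     else if q < 7 \<or> (q < 14 \<and> s = [Z0]) then
       (if i = 1 then
          (if 7 \<le> q \<or> s = [Z0] then (x, 0, q, s)
           else if last s = TS 0 then (x, 0, q, butlast s @ [TS 1])
           else (x, 0, q + 7, s))
        else if q < 7 then (x, i - 1, counter_step (- letter_weight (q div 2) (x ! (i - 2))) (q, s))
        else (x, i - 1, q, s))
     else if i \<le> length x then (x, i, q, s)
     else if q < 14 then (if last s = TS 0 then (x, i, q, butlast s) else (x, i, q + 7, butlast s))
     else if q < 21 then
       (if s = [Z0] then (x, i, q - 14, s)
        else if last s = TS 0 then (x, i, q + 7, butlast s)
        else (x, i, q - 14, s))
     else (x, i, q - 21, s @ [TS 0]))"

lemma counter_step_state_lt:
  assumes "q < 7" "q = 6 \<Longrightarrow> e = 0"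
  shows "fst (counter_step e (q, s)) < 7"
proof (cases "q = 6")
  case False
  then have "fst (counter_step e (q, s)) div 2 < 3"
    using assms(1) counter_step_div2[of e q s] by linarith
  then show ?thesis by linarith
qed (use assms in \<open>simp add: counter_step_def\<close>)

lemma next_conf_letter:
  assumes "q < 7" "s \<noteq> []" "tape x ! i = Sym l"
  shows "next_conf (x, i, q, s) = (x, Suc i, counter_step (letter_weight (q div 2) l) (q, s))"
  using assms counter_step_top[OF assms(2), of "letter_weight (q div 2) l" q]
  by (auto simp: move_def split: prod.split)

lemma prev_next_conf_letter:
  assumes "0 < i" "i \<le> length x" "q < 7" "wf_stack s"
  shows "next_conf (x, i, q, s) \<in> Conf L5_qpa \<and> prev_conf (next_conf (x, i, q, s)) = (x, i, q, s)"
proof -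
  define e where "e = letter_weight (q div 2) (x ! (i - 1))"
  obtain q' s' where step: "counter_step e (q, s) = (q', s')" by fastforce
  have s_ne: "s \<noteq> []" using assms(4) by (rule wf_stack_nonempty)
  have next_eq: "next_conf (x, i, q, s) = (x, Suc i, q', s')"
    using next_conf_letter[OF assms(3) s_ne] assms(1,2) step by (simp add: tape_nth e_def)
  have q'_lt: "q' < 7"
    using counter_step_state_lt[OF assms(3), of e s] step by (simp add: e_def letter_weight_def)
  moreover have "wf_stack s'" using counter_step_wf_stack[OF assms(4), of e q] step by simp
  moreover have "q' div 2 = q div 2" using counter_step_div2[of e q s] step by simp
  then have "prev_conf (x, Suc i, q', s') = (x, i, counter_step (- e) (q', s'))"
    using assms(1) q'_lt by (simp add: e_def)
  moreover have "counter_step (- e) (q', s') = (q, s)"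
    using counter_step_inverse[OF _ s_ne, of e q] letter_weight_cases step by (simp add: e_def)
  ultimately show ?thesis
    using next_eq assms(2) by (simp add: Conf_L5_qpa)
qed

lemma next_prev_conf_letter:
  assumes "2 \<le> i" "i \<le> length x + 1" "q < 7" "wf_stack s"
  shows "prev_conf (x, i, q, s) \<in> Conf L5_qpa \<and> next_conf (prev_conf (x, i, q, s)) = (x, i, q, s)"
proof -
  define l where "l = x ! (i - 2)"
  define e where "e = letter_weight (q div 2) l"
  obtain q' s' where step: "counter_step (- e) (q, s) = (q', s')" by fastforce
  have s_ne: "s \<noteq> []" using assms(4) by (rule wf_stack_nonempty)
  have prev_eq: "prev_conf (x, i, q, s) = (x, i - 1, q', s')"
    using assms(1,3) step by (simp add: e_def l_def)
  have q'_lt: "q' < 7"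
    using counter_step_state_lt[OF assms(3), of "- e" s] step by (simp add: e_def letter_weight_def)
  moreover have wf': "wf_stack s'" using counter_step_wf_stack[OF assms(4), of "- e" q] step by simp
  moreover have "q' div 2 = q div 2" using counter_step_div2[of "- e" q s] step by simp
  moreover have "tape x ! (i - 1) = Sym l"
    using assms(1,2) by (simp add: tape_nth l_def numeral_2_eq_2)
  ultimately have "next_conf (x, i - 1, q', s') = (x, i, counter_step e (q', s'))"
    using next_conf_letter[of q' s' x "i - 1" l] assms(1) by (auto simp: e_def wf_stack_def)
  moreover have "- e \<in> {-1, 0, 1}" using letter_weight_cases[of "q div 2" l] by (auto simp: e_def)
  then have "counter_step e (q', s') = (q, s)"
    using counter_step_inverse[OF _ s_ne, of "- e" q] step by simp
  ultimately show ?thesis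
    using prev_eq q'_lt wf' assms(2) by (simp add: Conf_L5_qpa)
qed

lemma prev_next_conf_boundary:
  assumes "(x, i, q, s) \<in> Conf L5_qpa" "\<not> (0 < i \<and> i \<le> length x \<and> q < 7)"
  shows "next_conf (x, i, q, s) \<in> Conf L5_qpa \<and> prev_conf (next_conf (x, i, q, s)) = (x, i, q, s)"
proof -
  have wf: "wf_stack s" and "i < length x + 2" "q < 28"
    using assms(1) by (simp_all add: Conf_L5_qpa)
  then consider "i = 0" | "0 < i" "i \<le> length x" "7 \<le> q" | "i = length x + 1"
    using assms(2) by linarith
  then show ?thesis
    by cases (use wf assms in \<open>cases rule: wf_stack_cases;
        auto simp: move_def tape_nth Conf_L5_qpa butlast_append\<close>)+
qed

lemma next_prev_conf_boundary:
  assumes "(x, i, q, s) \<in> Conf L5_qpa" "\<not> (2 \<le> i \<and> q < 7)"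
  shows "prev_conf (x, i, q, s) \<in> Conf L5_qpa \<and> next_conf (prev_conf (x, i, q, s)) = (x, i, q, s)"
proof -
  have wf: "wf_stack s" and "i < length x + 2" "q < 28"
    using assms(1) by (simp_all add: Conf_L5_qpa)
  then consider "i = 0" | "i = 1" | "2 \<le> i" "i \<le> length x" "7 \<le> q"
    | "i = length x + 1" "2 \<le> i" "7 \<le> q"
    using assms(2) by linarith
  then show ?thesis
    by cases (use wf assms in \<open>cases rule: wf_stack_cases;
        auto simp: move_def tape_nth Conf_L5_qpa butlast_append\<close>)+
qed

lemma prev_next_conf:
  assumes "cf \<in> Conf L5_qpa"
  shows "next_conf cf \<in> Conf L5_qpa \<and> prev_conf (next_conf cf) = cf"
proof -
  obtain x i q s where cf: "cf = (x, i, q, s)" by (cases cf) auto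
  then have "wf_stack s" using assms by (simp add: Conf_L5_qpa)
  then show ?thesis
    using cf assms prev_next_conf_letter[of i x q s] prev_next_conf_boundary[of x i q s] by blast
qed

lemma next_prev_conf:
  assumes "d \<in> Conf L5_qpa"
  shows "prev_conf d \<in> Conf L5_qpa \<and> next_conf (prev_conf d) = d"
proof -
  obtain x i q s where d: "d = (x, i, q, s)" by (cases d) auto
  then have "wf_stack s" "i < length x + 2" using assms by (simp_all add: Conf_L5_qpa)
  then show ?thesis
    using d assms next_prev_conf_letter[of i x q s] next_prev_conf_boundary[of x i q s] by fastforce
qed

lemma bij_betw_prev_conf: "bij_betw prev_conf (Conf L5_qpa) (Conf L5_qpa)"
  by (rule bij_betw_byWitness[where f' = next_conf]) (use prev_next_conf next_prev_conf in auto)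

definition is_split_conf :: "config \<Rightarrow> bool" where
  "is_split_conf cf \<longleftrightarrow> (\<exists>x q. q \<in> branch_starts \<and> cf = (x, 0, q, [Z0]))"

lemma branch_starts_lt: "q \<in> branch_starts \<Longrightarrow> q < 7"
  by (auto simp: branch_starts_def)

lemma amp_L5_classical:
  assumes "cf \<in> Conf L5_qpa" "\<not> is_split_conf cf"
  shows "amp L5_qpa cf d = (if d = next_conf cf then 1 else 0)"
proof -
  obtain x i q s where cf: "cf = (x, i, q, s)" by (cases cf) auto
  obtain x' i' q' s' where d: "d = (x', i', q', s')" by (cases d) auto
  have wf: "wf_stack s" and "i < length x + 2" using assms(1) cf by (simp_all add: Conf_L5_qpa)
  obtain p dir \<omega>0 where mv: "move q (tape x ! i) (last s) = (p, dir, \<omega>0)" by (metis prod.exhaust)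
  have "\<not> (q \<in> branch_starts \<and> tape x ! i = LEnd \<and> last s = Z0)"
    using assms(2) cf wf \<open>i < length x + 2\<close>
    by (auto simp: is_split_conf_def tape_nth wf_stack_last_Z0_iff split: if_splits)
  then have "L5_delta q (tape x ! i) (last s) q'' d' \<omega> =
      (if d' = dir \<and> \<omega> = \<omega>0 then (if q'' = p then 1 else 0) else 0)" for q'' d' \<omega>
    using mv wf_stack_last[OF wf] assms(1) cf by (auto simp: L5_delta_def Conf_L5_qpa)
  then have "amp L5_qpa cf d =
      (if x' = x \<and> i' = (if dir = Right then Suc i else i) \<and> s' = butlast s @ \<omega>0
       then (if q' = p then 1 else 0) else 0)"
    unfolding cf d using wf_stack_nonempty[OF wf] by (intro amp_single_move) simp_all
  then show ?thesis using cf d mv by auto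
qed

lemma amp_L5_split:
  assumes "q \<in> branch_starts"
  shows "amp L5_qpa (x, 0, q, [Z0]) (x', i', q', s') =
    (if x' = x \<and> i' = 1 \<and> s' = [Z0] \<and> q' \<in> branch_starts
     then complex_of_real (split_amp q q') else 0)"
proof -
  have "L5_delta q (tape x ! 0) (last [Z0]) q'' d' \<omega> =
      (if d' = Right \<and> \<omega> = [Z0]
       then (if q'' \<in> branch_starts then complex_of_real (split_amp q q'') else 0) else 0)"
    for q'' d' \<omega>
    using assms by (auto simp: L5_delta_def)
  then show ?thesis by (subst amp_single_move) auto
qed

definition split_matrix :: "config \<Rightarrow> config \<Rightarrow> complex" where
  "split_matrix cf e =
    (if is_split_conf cf \<and> is_split_conf e \<and> fst cf = fst e
     then complex_of_real (split_amp (conf_state cf) (conf_state e))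
     else if cf = e then 1 else 0)"

lemma split_matrix_sym: "split_matrix cf e = split_matrix e cf"
  unfolding split_matrix_def split_amp_def by (auto simp: householder_sym)

lemma next_conf_split: "q < 7 \<Longrightarrow> next_conf (x, 0, q, [Z0]) = (x, 1, q, [Z0])"
  by (simp add: move_def)

lemma prev_conf_eq_split_iff:
  assumes "d \<in> Conf L5_qpa" "p < 7"
  shows "prev_conf d = (x, 0, p, [Z0]) \<longleftrightarrow> d = (x, 1, p, [Z0])"
  using assms next_prev_conf[OF assms(1)] next_conf_split[OF assms(2)] by auto

lemma amp_L5_split_conf:
  assumes "q \<in> branch_starts" "d \<in> Conf L5_qpa"
  shows "amp L5_qpa (x, 0, q, [Z0]) d = split_matrix (x, 0, q, [Z0]) (prev_conf d)"
proof -
  obtain x' i' q' s' where d: "d = (x', i', q', s')" by (cases d) auto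
  have row: "split_matrix (x, 0, q, [Z0]) e =
      (if \<exists>p\<in>branch_starts. e = (x, 0, p, [Z0])
       then complex_of_real (split_amp q (conf_state e)) else 0)"
    for e
    using assms(1) by (auto simp: split_matrix_def is_split_conf_def)
  have "(\<exists>p\<in>branch_starts. prev_conf d = (x, 0, p, [Z0])) \<longleftrightarrow>
      x' = x \<and> i' = 1 \<and> s' = [Z0] \<and> q' \<in> branch_starts"
    using prev_conf_eq_split_iff[OF assms(2) branch_starts_lt] d by auto
  moreover have "x' = x \<and> i' = 1 \<and> s' = [Z0] \<and> q' \<in> branch_starts \<Longrightarrow>
      conf_state (prev_conf d) = q'"
    using d branch_starts_lt by auto
  ultimately show ?thesis
    unfolding row d amp_L5_split[OF assms(1)] by auto
qed

lemma amp_L5_qpa: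
  assumes "cf \<in> Conf L5_qpa"
  shows "amp L5_qpa cf d = (if d \<in> Conf L5_qpa then split_matrix cf (prev_conf d) else 0)"
proof (cases "is_split_conf cf")
  case False
  have "d \<in> Conf L5_qpa \<Longrightarrow> d = next_conf cf \<longleftrightarrow> prev_conf d = cf"
    using prev_next_conf[OF assms] next_prev_conf[of d] by metis
  then show ?thesis
    using amp_L5_classical[OF assms False] prev_next_conf[OF assms] False
    by (auto simp: split_matrix_def)
next
  case True
  then obtain x q where cf: "cf = (x, 0, q, [Z0])" "q \<in> branch_starts"
    by (auto simp: is_split_conf_def)
  obtain x' i' q' s' where d: "d = (x', i', q', s')" by (cases d) auto
  have "amp L5_qpa cf d \<noteq> 0 \<Longrightarrow> d \<in> Conf L5_qpa"
    unfolding cf d amp_L5_split[OF cf(2)]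
    by (auto simp: Conf_L5_qpa branch_starts_def split: if_splits)
  then show ?thesis
    using amp_L5_split_conf[OF cf(2)] cf(1) by auto
qed

lemma split_amp_orthonormal:
  assumes "p \<in> branch_starts" "p' \<in> branch_starts"
  shows "(\<Sum>r\<in>branch_starts. split_amp p r * split_amp p' r) = (if p = p' then 1 else 0)"
  unfolding split_amp_def
  by (rule householder_orthonormal)
    (use assms in \<open>simp_all add: branch_starts_def split_vector_def\<close>)

lemma split_matrix_row_split:
  assumes "q \<in> branch_starts" "cf' \<in> Conf L5_qpa"
  shows "((\<lambda>e. split_matrix (x, 0, q, [Z0]) e * cnj (split_matrix cf' e))
           has_sum (if (x, 0, q, [Z0]) = cf' then 1 else 0)) (Conf L5_qpa)"
proof -
  let ?cf = "(x, 0, q, [Z0])"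
  let ?B = "(\<lambda>p. (x, 0, p, [Z0])) ` branch_starts"
  have split: "is_split_conf ?cf" using assms(1) by (auto simp: is_split_conf_def)
  have fin: "finite ?B" by (simp add: branch_starts_def)
  have sub: "?B \<subseteq> Conf L5_qpa" using branch_starts_lt by (force simp: Conf_L5_qpa)
  have outside: "split_matrix ?cf e * cnj (split_matrix cf' e) = 0" if "e \<in> Conf L5_qpa - ?B" for e
    using that split by (auto simp: split_matrix_def is_split_conf_def)
  have inside:
    "(\<Sum>e\<in>?B. split_matrix ?cf e * cnj (split_matrix cf' e)) = (if ?cf = cf' then 1 else 0)"
  proof (cases "is_split_conf cf' \<and> fst cf' = x")
    case True
    then obtain q' where cf': "cf' = (x, 0, q', [Z0])" "q' \<in> branch_starts"
      by (auto simp: is_split_conf_def)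
    have "(\<Sum>e\<in>?B. split_matrix ?cf e * cnj (split_matrix cf' e))
        = (\<Sum>p\<in>branch_starts.
             split_matrix ?cf (x, 0, p, [Z0]) * cnj (split_matrix cf' (x, 0, p, [Z0])))"
      by (simp add: sum.reindex inj_on_def)
    also have "\<dots> = (\<Sum>p\<in>branch_starts. complex_of_real (split_amp q p * split_amp q' p))"
      using assms(1) cf' by (intro sum.cong) (auto simp: split_matrix_def is_split_conf_def)
    also have "\<dots> = (if q = q' then 1 else 0)"
      unfolding of_real_sum[symmetric] split_amp_orthonormal[OF assms(1) cf'(2)] by simp
    finally show ?thesis using cf' by simp
  next
    case False
    then have "split_matrix cf' e = 0" if "e \<in> ?B" for e
      using that by (auto simp: split_matrix_def is_split_conf_def)
    moreover have "?cf \<noteq> cf'" using False split by auto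
    ultimately show ?thesis by simp
  qed
  show ?thesis by (rule has_sum_finite_neutralI[OF fin sub outside inside[symmetric]])
qed

lemma split_matrix_rows:
  assumes "cf \<in> Conf L5_qpa" "cf' \<in> Conf L5_qpa"
  shows "((\<lambda>e. split_matrix cf e * cnj (split_matrix cf' e)) has_sum (if cf = cf' then 1 else 0))
           (Conf L5_qpa)"
proof (cases "is_split_conf cf")
  case True
  then obtain x q where "cf = (x, 0, q, [Z0])" "q \<in> branch_starts"
    by (auto simp: is_split_conf_def)
  then show ?thesis using split_matrix_row_split[OF _ assms(2)] by simp
next
  case False
  then have "split_matrix cf e = (if e = cf then 1 else 0)" for e
    by (auto simp: split_matrix_def)
  moreover have "split_matrix cf' cf = (if cf = cf' then 1 else 0)"
    using False by (auto simp: split_matrix_def)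
  ultimately show ?thesis
    by (intro has_sum_finite_neutralI[of "{cf}"]) (use assms in auto)
qed

lemma unitary_L5_qpa: "unitary_UA L5_qpa"
proof (rule unitary_UA_permuted[OF bij_betw_prev_conf amp_L5_qpa split_matrix_rows])
  fix e e' assume "e \<in> Conf L5_qpa" "e' \<in> Conf L5_qpa"
  then show "((\<lambda>cf. split_matrix cf e * cnj (split_matrix cf e')) has_sum (if e = e' then 1 else 0))
               (Conf L5_qpa)"
    using split_matrix_rows by (simp add: split_matrix_sym[of _ e] split_matrix_sym[of _ e'])
qed

lemma is_QPA_L5_qpa: "is_QPA L5_qpa"
proof -
  have "Delta L5_qpa = {Z0, TS 0, TS 1}" by (auto simp: Delta_def)
  moreover have "set w \<subseteq> {TS 0, TS 1} \<longleftrightarrow> (\<forall>y\<in>set w. y \<in> TS ` Ts L5_qpa)" for w by auto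
  ultimately show ?thesis
    using L5_delta_wf unitary_L5_qpa
    unfolding is_QPA_def in_Z0TStar_def in_TStar_def by (auto simp: branch_starts_def)
qed

definition branch_conf :: "abc list \<Rightarrow> nat \<Rightarrow> nat \<Rightarrow> config" where
  "branch_conf x m k = (x, m, counter_conf k (counter_value k (take (m - 1) x)))"

definition branch_amp :: "nat \<Rightarrow> complex" where
  "branch_amp k = complex_of_real (split_amp 0 (2 * k))"

lemma counter_conf_div2: "fst (counter_conf k v) div 2 = k"
  by (simp add: counter_conf_def)

lemma branch_conf_state_lt: "k < 4 \<Longrightarrow> conf_state (branch_conf x m k) < 7"
  by (cases "k = 3") (auto simp: branch_conf_def counter_conf_def counter_value_idle)

lemma inj_on_branch_conf: "inj_on (branch_conf x m) {..<4}"
  by (rule inj_onI) (metis branch_conf_def counter_conf_div2 prod.inject)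

lemma branch_conf_in_Conf:
  assumes "k < 4" "0 < m" "m < length x + 2"
  shows "branch_conf x m k \<in> Conf L5_qpa \<and> \<not> is_split_conf (branch_conf x m k)"
  using assms branch_conf_state_lt[OF assms(1), of x m]
  by (auto simp: branch_conf_def Conf_L5_qpa is_split_conf_def counter_conf_def)

lemma next_branch_conf:
  assumes "k < 4" "0 < m" "m \<le> length x"
  shows "next_conf (branch_conf x m k) = branch_conf x (Suc m) k"
proof -
  define w where "w = take (m - 1) x"
  define l where "l = x ! (m - 1)"
  have take_m: "take m x = w @ [l]"
    using assms(2,3) by (simp add: w_def l_def take_Suc_conv_app_nth[symmetric])
  obtain q s where qs: "counter_conf k (counter_value k w) = (q, s)" by fastforce
  have "q < 7"
    using branch_conf_state_lt[OF assms(1), of x m] qs by (simp add: branch_conf_def w_def)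
  moreover have "q div 2 = k" using counter_conf_div2[of k "counter_value k w"] qs by simp
  moreover have "s \<noteq> []" using qs by (auto simp: counter_conf_def split: if_splits)
  moreover have "tape x ! m = Sym l" using assms(2,3) by (simp add: tape_nth l_def)
  ultimately have "next_conf (x, m, q, s) = (x, Suc m, counter_step (letter_weight k l) (q, s))"
    using next_conf_letter by simp
  also have "\<dots> = (x, Suc m, counter_conf k (counter_value k (take m x)))"
    using counter_step_counter_conf[OF letter_weight_cases, of k l k "counter_value k w"] qs take_m
    by simp
  finally show ?thesis using qs by (simp add: branch_conf_def w_def)
qed

lemma branch_starts_image: "branch_starts = (\<lambda>k. 2 * k) ` {..<4}"
  by (simp add: branch_starts_def lessThan_nat_numeral lessThan_Suc insert_commute)

lemma applyU_init_vec:
  "applyU L5_qpa (init_vec L5_qpa x) = superpos {..<4} (branch_conf x 1) branch_amp"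
proof
  fix d :: config
  obtain x' i' q' s' where d: "d = (x', i', q', s')" by (cases d) auto
  have branch_conf_1: "branch_conf x (Suc 0) k = (x, Suc 0, 2 * k, [Z0])" for k
    by (simp add: branch_conf_def counter_conf_def)
  have "supp_v (init_vec L5_qpa x) = {(x, 0, 0, [Z0])}"
    by (auto simp: supp_v_def init_vec_def)
  then have "applyU L5_qpa (init_vec L5_qpa x) d = amp L5_qpa (x, 0, 0, [Z0]) d"
    by (simp add: applyU_def init_vec_def)
  also have "\<dots> = (if x' = x \<and> i' = 1 \<and> s' = [Z0] \<and> q' \<in> branch_starts
                   then complex_of_real (split_amp 0 q') else 0)"
    unfolding d by (rule amp_L5_split) (simp add: branch_starts_def)
  also have "\<dots> = superpos {..<4} (branch_conf x 1) branch_amp d"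
  proof (cases "x' = x \<and> i' = 1 \<and> s' = [Z0] \<and> q' \<in> branch_starts")
    case True
    then obtain k where k: "k < 4" "q' = 2 * k" by (auto simp: branch_starts_image)
    then have "d = branch_conf x 1 k" using True by (simp add: d branch_conf_1)
    then show ?thesis
      using True k superpos_at[OF _ inj_on_branch_conf, of k x 1 branch_amp]
      by (simp add: branch_amp_def)
  next
    case False
    then have "d \<notin> branch_conf x 1 ` {..<4}" by (auto simp: d branch_conf_1 branch_starts_image)
    then show ?thesis using False superpos_outside[of d "branch_conf x 1"] by auto
  qed
  finally show "applyU L5_qpa (init_vec L5_qpa x) d =
      superpos {..<4} (branch_conf x 1) branch_amp d" .
qed

lemma proj_branches_running:
  assumes "\<And>q. q < 7 \<Longrightarrow> P q"
  shows "proj P (superpos {..<4} (branch_conf x m) \<alpha>) = superpos {..<4} (branch_conf x m) \<alpha>"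
  unfolding proj_superpos using assms branch_conf_state_lt by (intro superpos_cong) auto

lemma proj_branches_halting:
  assumes "\<And>q. q < 7 \<Longrightarrow> \<not> P q"
  shows "proj P (superpos {..<4} (branch_conf x m) \<alpha>) = (\<lambda>_. 0)"
  unfolding proj_superpos using assms branch_conf_state_lt by (intro superpos_zero) auto

lemma applyU_branches:
  assumes "0 < m" "m < length x + 2"
  shows "applyU L5_qpa (superpos {..<4} (branch_conf x m) \<alpha>) =
    superpos {..<4} (next_conf \<circ> branch_conf x m) \<alpha>"
  using assms branch_conf_in_Conf amp_L5_classical
  by (intro applyU_superpos inj_on_branch_conf) auto

lemma applyU_branches_letter:
  assumes "0 < m" "m \<le> length x"
  shows "applyU L5_qpa (superpos {..<4} (branch_conf x m) \<alpha>) =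
    superpos {..<4} (branch_conf x (Suc m)) \<alpha>"
proof -
  have "applyU L5_qpa (superpos {..<4} (branch_conf x m) \<alpha>) =
      superpos {..<4} (next_conf \<circ> branch_conf x m) \<alpha>"
    using assms by (intro applyU_branches) simp_all
  also have "\<dots> = superpos {..<4} (branch_conf x (Suc m)) \<alpha>"
    using next_branch_conf[OF _ assms] by (simp add: superpos_def)
  finally show ?thesis .
qed

lemma applyU_run_vec:
  "m \<le> length x \<Longrightarrow>
    applyU L5_qpa (run_vec L5_qpa x m) = superpos {..<4} (branch_conf x (Suc m)) branch_amp"
proof (induction m)
  case 0
  then show ?case by (simp add: applyU_init_vec)
next
  case (Suc m)
  then have "run_vec L5_qpa x (Suc m) = superpos {..<4} (branch_conf x (Suc m)) branch_amp"
    by (simp add: proj_branches_running)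
  then show ?case using applyU_branches_letter[of "Suc m" x] Suc.prems by simp
qed

lemma run_vec_final:
  "run_vec L5_qpa x (Suc (length x)) = superpos {..<4} (branch_conf x (Suc (length x))) branch_amp"
  by (simp add: applyU_run_vec proj_branches_running)

lemma applyU_run_vec_final:
  "applyU L5_qpa (run_vec L5_qpa x (Suc (length x))) =
    superpos {..<4} (next_conf \<circ> branch_conf x (Suc (length x))) branch_amp"
  unfolding run_vec_final by (rule applyU_branches) simp_all

section \<open>Acceptance and rejection probabilities\<close>

definition halting_state :: "nat \<Rightarrow> int \<Rightarrow> nat" where
  "halting_state k v =
    (if v = 0 then 2 * k + 14 else if v > 0 then 2 * k + 21 else if v = -1 then 2 * k + 15
     else 2 * k + 22)"

definition branch_accepts :: "nat \<Rightarrow> int \<Rightarrow> bool" where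
  "branch_accepts k v \<longleftrightarrow> (k < 2 \<and> v = 0) \<or> (k = 2 \<and> v \<noteq> 0)"

lemma final_branch_state:
  assumes "k < 4"
  shows "conf_state (next_conf (branch_conf x (Suc (length x)) k)) =
    halting_state k (counter_value k x)"
proof -
  have "tape x ! Suc (length x) = REnd" by (simp add: tape_def nth_append)
  then show ?thesis
    using assms
    by (auto simp: branch_conf_def counter_conf_def move_def halting_state_def counter_value_idle)
qed

lemma halting_state_accepting:
  assumes "k < 4" "k = 3 \<Longrightarrow> v = 0"
  shows "halting_state k v \<in> Qa L5_qpa \<longleftrightarrow> branch_accepts k v"
proof -
  consider "k = 0" | "k = 1" | "k = 2" | "k = 3" using assms(1) by linarith
  then show ?thesis by cases (use assms(2) in \<open>auto simp: halting_state_def branch_accepts_def\<close>)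
qed

lemma halting_state_rejecting:
  assumes "k < 4" "k = 3 \<Longrightarrow> v = 0"
  shows "halting_state k v \<in> Qr L5_qpa \<longleftrightarrow> \<not> branch_accepts k v"
proof -
  consider "k = 0" | "k = 1" | "k = 2" | "k = 3" using assms(1) by linarith
  then show ?thesis by cases (use assms(2) in \<open>auto simp: halting_state_def branch_accepts_def\<close>)
qed

lemma run_vec_halted: "length x + 2 \<le> n \<Longrightarrow> run_vec L5_qpa x n = (\<lambda>_. 0)"
proof (induction n)
  case (Suc n)
  show ?case
  proof (cases "n = Suc (length x)")
    case True
    have "conf_state (next_conf (branch_conf x (Suc (length x)) k)) \<in> Qa L5_qpa \<union> Qr L5_qpa"
      if "k < 4" for k
    proof -
      have v3: "k = 3 \<Longrightarrow> counter_value k x = 0" by (simp add: counter_value_idle)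
      have "halting_state k (counter_value k x) \<in> Qa L5_qpa \<or>
            halting_state k (counter_value k x) \<in> Qr L5_qpa"
        using halting_state_accepting[OF that v3] halting_state_rejecting[OF that v3] by argo
      then show ?thesis unfolding final_branch_state[OF that] by (simp only: Un_iff)
    qed
    then show ?thesis
      unfolding True run_vec.simps(2)[of _ _ "Suc (length x)"] applyU_run_vec_final proj_superpos
      by (intro superpos_zero) auto
  next
    case False
    then show ?thesis using Suc by (simp add: applyU_zero proj_zero)
  qed
qed simp

lemma inj_on_final_branch_conf: "inj_on (next_conf \<circ> branch_conf x (Suc (length x))) {..<4}"
proof (rule comp_inj_on[OF inj_on_branch_conf])
  have "branch_conf x (Suc (length x)) ` {..<4} \<subseteq> Conf L5_qpa"
    using branch_conf_in_Conf by auto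
  moreover have "inj_on next_conf (Conf L5_qpa)"
    by (rule inj_on_inverseI[where g = prev_conf]) (use prev_next_conf in blast)
  ultimately show "inj_on next_conf (branch_conf x (Suc (length x)) ` {..<4})"
    using inj_on_subset by blast
qed

lemma halting_prob:
  assumes "\<And>q. q < 7 \<Longrightarrow> \<not> P q"
  shows "(\<Sum>n. sqnorm (proj P (applyU L5_qpa (run_vec L5_qpa x n)))) =
    (\<Sum>k<4. if P (halting_state k (counter_value k x)) then (split_amp 0 (2 * k))\<^sup>2 else 0)"
proof -
  let ?f = "\<lambda>n. sqnorm (proj P (applyU L5_qpa (run_vec L5_qpa x n)))"
  have "?f n = 0" if "n \<noteq> Suc (length x)" for n
  proof (cases "n \<le> length x")
    case True
    then show ?thesis by (simp add: applyU_run_vec proj_branches_halting[OF assms] sqnorm_zero)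
  next
    case False
    then show ?thesis using that by (simp add: run_vec_halted applyU_zero proj_zero sqnorm_zero)
  qed
  then have "(\<Sum>n. ?f n) = ?f (Suc (length x))"
    by (subst suminf_finite[of "{Suc (length x)}"]) auto
  also have "\<dots> = (\<Sum>k<4. (cmod (if P (conf_state ((next_conf \<circ> branch_conf x (Suc (length x))) k))
                                  then branch_amp k else 0))\<^sup>2)"
    by (simp only: applyU_run_vec_final proj_superpos sqnorm_superpos[OF _ inj_on_final_branch_conf]
        finite_lessThan)
  also have "\<dots> =
      (\<Sum>k<4. if P (halting_state k (counter_value k x)) then (split_amp 0 (2 * k))\<^sup>2 else 0)"
    by (intro sum.cong) (auto simp: final_branch_state branch_amp_def)
  finally show ?thesis .
qed

lemma acc_prob_L5_qpa:
  "acc_prob L5_qpa x =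
    (\<Sum>k<4. if branch_accepts k (counter_value k x) then (split_amp 0 (2 * k))\<^sup>2 else 0)"
proof -
  have "acc_prob L5_qpa x =
    (\<Sum>k<4. if halting_state k (counter_value k x) \<in> Qa L5_qpa then (split_amp 0 (2 * k))\<^sup>2 else 0)"
    unfolding acc_prob_def by (rule halting_prob) auto
  also have "\<dots> = (\<Sum>k<4. if branch_accepts k (counter_value k x) then (split_amp 0 (2 * k))\<^sup>2 else 0)"
    by (intro sum.cong) (use halting_state_accepting counter_value_idle in auto)
  finally show ?thesis .
qed

lemma rej_prob_L5_qpa:
  "rej_prob L5_qpa x =
    (\<Sum>k<4. if branch_accepts k (counter_value k x) then 0 else (split_amp 0 (2 * k))\<^sup>2)"
proof -
  have "rej_prob L5_qpa x =
    (\<Sum>k<4. if halting_state k (counter_value k x) \<in> Qr L5_qpa then (split_amp 0 (2 * k))\<^sup>2 else 0)"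
    unfolding rej_prob_def by (rule halting_prob) auto
  also have "\<dots> = (\<Sum>k<4. if branch_accepts k (counter_value k x) then 0 else (split_amp 0 (2 * k))\<^sup>2)"
    by (intro sum.cong) (use halting_state_rejecting counter_value_idle in auto)
  finally show ?thesis .
qed

lemma split_amp_from_start:
  "split_amp 0 0 = 14/31" "split_amp 0 2 = 14/31" "split_amp 0 4 = 20/31" "split_amp 0 6 = 13/31"
  by (simp_all add: split_amp_def householder_def branch_starts_def split_vector_def)

lemma sum_lessThan_4:
  fixes f :: "nat \<Rightarrow> 'a :: comm_monoid_add"
  shows "(\<Sum>k<4. f k) = f 0 + f 1 + f 2 + f 3"
  by (simp add: eval_nat_numeral add.assoc)

theorem theorem5:
  shows "\<exists>A. is_QPA A \<and>
           (\<forall>x. x \<in> L5 \<longrightarrow> acc_prob A x \<ge> 4/7) \<and>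
           (\<forall>x. x \<notin> L5 \<longrightarrow> rej_prob A x \<ge> 4/7)"
proof (intro exI[of _ L5_qpa] conjI allI impI)
  show "is_QPA L5_qpa" by (rule is_QPA_L5_qpa)
next
  fix x assume "x \<in> L5"
  then have "(counter_value 0 x = 0) \<noteq> (counter_value 1 x = 0)" "counter_value 2 x \<noteq> 0"
    by (auto simp: L5_iff_counter_values counter_value_2_eq)
  then show "acc_prob L5_qpa x \<ge> 4/7"
    by (auto simp: acc_prob_L5_qpa sum_lessThan_4 branch_accepts_def split_amp_from_start
        power2_eq_square)
next
  fix x assume "x \<notin> L5"
  then have "(counter_value 0 x = 0) = (counter_value 1 x = 0)"
    "counter_value 0 x = 0 \<Longrightarrow> counter_value 2 x = 0"
    by (auto simp: L5_iff_counter_values counter_value_2_eq)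
  then show "rej_prob L5_qpa x \<ge> 4/7"
    by (auto simp: rej_prob_L5_qpa sum_lessThan_4 branch_accepts_def split_amp_from_start
        power2_eq_square)
qed

end
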